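(* Let $g:\mathbb{R}^n\to\mathbb{R}^m$ and $f:\mathbb{R}^m\to\mathbb{R}^r$. Suppose $g$ is second-order gph-regular at $x^*$ and $f$ is second-order gph-regular at $g(x^* )$. Then the composite mapping $h:=f\circ g$ is second-order gph-regular at $x^*$.
   Context: $g'(x;d)=\lim_{t\downarrow0}(g(x+td)-g(x))/t$; second-order directional derivative $g''(x;d,w):=\lim_{t\downarrow0}\frac{g(x+td+\frac12t^2w)-g(x)-tg'(x;d)}{\frac12t^2}$; $g$ is second-order directionally differentiable at $x$ if these exist for all $d,w$. A mapping $g$ is second-order gph-regular at $x^*$ if it is locally Lipschitz continuous and second-order directionally differentiable at $x^*$, and for every direction $d$ and every path $w:\mathbb{R}_+\to\mathbb{R}^n$ with $tw(t)\to0$ as $t\downarrow0$ there is $r$ with $\|r(t)\|/t^2\to0$ as $t\downarrow0$ such that $g(x^*+td+\frac12t^2w(t))=g(x^* )+tg'(x^*;d)+\frac12t^2g''(x^*;d,w(t))+r(t)$ for $t\ge0$. *)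

theory Defs
  imports "HOL-Analysis.Analysis"
begin

definition dir_deriv :: "('a::real_normed_vector \<Rightarrow> 'b::real_normed_vector) \<Rightarrow> 'a \<Rightarrow> 'a \<Rightarrow> 'b" where
  "dir_deriv g x d = Lim (at_right 0) (\<lambda>t::real. (g (x + t *\<^sub>R d) - g x) /\<^sub>R t)"

definition dir_deriv2 :: "('a::real_normed_vector \<Rightarrow> 'b::real_normed_vector) \<Rightarrow> 'a \<Rightarrow> 'a \<Rightarrow> 'a \<Rightarrow> 'b" where
  "dir_deriv2 g x d w = Lim (at_right 0)
     (\<lambda>t::real. (g (x + t *\<^sub>R d + ((1/2) * t\<^sup>2) *\<^sub>R w) - g x - t *\<^sub>R dir_deriv g x d) /\<^sub>R ((1/2) * t\<^sup>2))"

definition second_order_dir_differentiable :: "('a::real_normed_vector \<Rightarrow> 'b::real_normed_vector) \<Rightarrow> 'a \<Rightarrow> bool" where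
  "second_order_dir_differentiable g x \<longleftrightarrow>
     (\<forall>d. \<exists>v. ((\<lambda>t::real. (g (x + t *\<^sub>R d) - g x) /\<^sub>R t) \<longlongrightarrow> v) (at_right 0)) \<and>
     (\<forall>d w. \<exists>v. ((\<lambda>t::real. (g (x + t *\<^sub>R d + ((1/2) * t\<^sup>2) *\<^sub>R w) - g x - t *\<^sub>R dir_deriv g x d)
                         /\<^sub>R ((1/2) * t\<^sup>2)) \<longlongrightarrow> v) (at_right 0))"

definition locally_lipschitz_at :: "('a::metric_space \<Rightarrow> 'b::metric_space) \<Rightarrow> 'a \<Rightarrow> bool" where
  "locally_lipschitz_at g x \<longleftrightarrow> (\<exists>e>0. \<exists>L. L-lipschitz_on (ball x e) g)"

definition second_order_gph_regular :: "('a::real_normed_vector \<Rightarrow> 'b::real_normed_vector) \<Rightarrow> 'a \<Rightarrow> bool" where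
  "second_order_gph_regular g x \<longleftrightarrow>
     locally_lipschitz_at g x \<and> second_order_dir_differentiable g x \<and>
     (\<forall>d (w::real \<Rightarrow> 'a). ((\<lambda>t. t *\<^sub>R w t) \<longlongrightarrow> 0) (at_right 0) \<longrightarrow>
        (\<exists>r::real \<Rightarrow> 'b.
           ((\<lambda>t. norm (r t) / t\<^sup>2) \<longlongrightarrow> 0) (at_right 0) \<and>
           (\<forall>t\<ge>0. g (x + t *\<^sub>R d + ((1/2) * t\<^sup>2) *\<^sub>R w t)
                    = g x + t *\<^sub>R dir_deriv g x d + ((1/2) * t\<^sup>2) *\<^sub>R dir_deriv2 g x d (w t) + r t)))"

end

theory Submission
  imports Defs
begin

text \<open>Along a parabolic path \<open>x + t d + (1/2) t\<^sup>2 u(t)\<close> with \<open>t u(t) \<rightarrow> 0\<close>, regularity of \<open>g\<close>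
  makes the image path parabolic again: it is \<open>g(x) + t g'(x;d) + (1/2) t\<^sup>2 U(t)\<close> with
  \<open>U(t) = g''(x;d,u(t)) + o(1)\<close> and \<open>t U(t) \<rightarrow> 0\<close>. So regularity of \<open>f\<close> applies along the image
  path, and replacing \<open>U(t)\<close> by \<open>g''(x;d,u(t))\<close> costs only \<open>o(t\<^sup>2)\<close>, because local Lipschitz
  continuity makes \<open>f''(y;v,\<cdot>)\<close> globally Lipschitz. Hence \<open>f \<circ> g\<close> expands along every such path
  with \<open>(f \<circ> g)'(x;d) = f'(g x; g'(x;d))\<close> and \<open>(f \<circ> g)''(x;d,w) = f''(g x; g'(x;d), g''(x;d,w))\<close>.\<close>

lemma tendsto_first_order_quotient:
  fixes \<phi> :: "real \<Rightarrow> 'b::real_normed_vector"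
  assumes "((\<lambda>t. norm (\<phi> t - t *\<^sub>R A - ((1/2) * t\<^sup>2) *\<^sub>R B) / t\<^sup>2) \<longlongrightarrow> 0) (at_right 0)"
  shows "((\<lambda>t. \<phi> t /\<^sub>R t) \<longlongrightarrow> A) (at_right 0)"
proof -
  define E where "E t = \<phi> t - t *\<^sub>R A - ((1/2) * t\<^sup>2) *\<^sub>R B" for t
  have E: "((\<lambda>t. norm (E t) / t\<^sup>2) \<longlongrightarrow> 0) (at_right 0)"
    using assms by (simp add: E_def)
  have "((\<lambda>t. \<phi> t /\<^sub>R t - A) \<longlongrightarrow> 0) (at_right 0)"
  proof (rule Lim_null_comparison)
    show "\<forall>\<^sub>F t in at_right 0. norm (\<phi> t /\<^sub>R t - A) \<le> t * (norm (E t) / t\<^sup>2) + t * norm B / 2"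
      using eventually_at_right_less[of "0::real"]
    proof eventually_elim
      case (elim t)
      have "\<phi> t /\<^sub>R t - A = inverse t *\<^sub>R E t + (t/2) *\<^sub>R B"
        using elim by (simp add: E_def algebra_simps power2_eq_square)
      then have "norm (\<phi> t /\<^sub>R t - A) \<le> norm (inverse t *\<^sub>R E t) + norm ((t/2) *\<^sub>R B)"
        by (metis norm_triangle_ineq)
      also have "\<dots> = t * (norm (E t) / t\<^sup>2) + t * norm B / 2"
        using elim by (simp add: power2_eq_square field_simps)
      finally show ?case .
    qed
    have "((\<lambda>t. t * (norm (E t) / t\<^sup>2) + t * norm B / 2) \<longlongrightarrow> 0 * 0 + 0 * norm B / 2) (at_right 0)"
      by (intro tendsto_intros E) auto
    then show "((\<lambda>t. t * (norm (E t) / t\<^sup>2) + t * norm B / 2) \<longlongrightarrow> 0) (at_right 0)"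
      by simp
  qed
  then show ?thesis
    by (simp add: Lim_null[symmetric])
qed

lemma tendsto_second_order_quotient:
  fixes \<phi> :: "real \<Rightarrow> 'b::real_normed_vector"
  assumes "((\<lambda>t. norm (\<phi> t - t *\<^sub>R A - ((1/2) * t\<^sup>2) *\<^sub>R B) / t\<^sup>2) \<longlongrightarrow> 0) (at_right 0)"
  shows "((\<lambda>t. (\<phi> t - t *\<^sub>R A) /\<^sub>R ((1/2) * t\<^sup>2)) \<longlongrightarrow> B) (at_right 0)"
proof -
  define E where "E t = \<phi> t - t *\<^sub>R A - ((1/2) * t\<^sup>2) *\<^sub>R B" for t
  have "((\<lambda>t. (\<phi> t - t *\<^sub>R A) /\<^sub>R ((1/2) * t\<^sup>2) - B) \<longlongrightarrow> 0) (at_right 0)"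
  proof (rule Lim_null_comparison)
    show "\<forall>\<^sub>F t in at_right 0. norm ((\<phi> t - t *\<^sub>R A) /\<^sub>R ((1/2) * t\<^sup>2) - B) \<le> 2 * (norm (E t) / t\<^sup>2)"
      using eventually_at_right_less[of "0::real"]
    proof eventually_elim
      case (elim t)
      have "(\<phi> t - t *\<^sub>R A) /\<^sub>R ((1/2) * t\<^sup>2) - B = (2 / t\<^sup>2) *\<^sub>R E t"
        using elim by (simp add: E_def algebra_simps)
      then show ?case
        using elim by simp
    qed
    show "((\<lambda>t. 2 * (norm (E t) / t\<^sup>2)) \<longlongrightarrow> 0) (at_right 0)"
      using tendsto_mult_right_zero[OF assms, of 2] by (simp add: E_def)
  qed
  then show ?thesis
    by (simp add: Lim_null[symmetric])
qed

lemma tendsto_dir_deriv2: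
  assumes "second_order_dir_differentiable g x"
  shows "((\<lambda>t::real. (g (x + t *\<^sub>R d + ((1/2) * t\<^sup>2) *\<^sub>R w) - g x - t *\<^sub>R dir_deriv g x d)
            /\<^sub>R ((1/2) * t\<^sup>2)) \<longlongrightarrow> dir_deriv2 g x d w) (at_right 0)"
proof -
  from assms obtain l
    where l: "((\<lambda>t::real. (g (x + t *\<^sub>R d + ((1/2) * t\<^sup>2) *\<^sub>R w) - g x - t *\<^sub>R dir_deriv g x d)
                /\<^sub>R ((1/2) * t\<^sup>2)) \<longlongrightarrow> l) (at_right 0)"
    unfolding second_order_dir_differentiable_def by blast
  then have "dir_deriv2 g x d w = l"
    unfolding dir_deriv2_def by (rule tendsto_Lim[rotated]) simp
  with l show ?thesis
    by simp
qed

lemma lipschitz_on_dir_deriv2: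
  fixes f :: "'a::real_normed_vector \<Rightarrow> 'b::real_normed_vector"
  assumes "locally_lipschitz_at f y" and "second_order_dir_differentiable f y"
  obtains L where "\<And>v. L-lipschitz_on UNIV (dir_deriv2 f y v)"
proof -
  from assms(1) obtain e L where e: "e > 0" and L: "L-lipschitz_on (ball y e) f"
    unfolding locally_lipschitz_at_def by blast
  have "dist (dir_deriv2 f y v w) (dir_deriv2 f y v w') \<le> L * dist w w'" for v w w'
  proof -
    define Q where "Q z t = (f (y + t *\<^sub>R v + ((1/2) * t\<^sup>2) *\<^sub>R z) - f y - t *\<^sub>R dir_deriv f y v)
                              /\<^sub>R ((1/2) * t\<^sup>2)" for z t
    have lim: "((\<lambda>t. Q w t - Q w' t) \<longlongrightarrow> dir_deriv2 f y v w - dir_deriv2 f y v w') (at_right 0)"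
      unfolding Q_def by (intro tendsto_diff tendsto_dir_deriv2 assms(2))
    have path: "((\<lambda>t. y + t *\<^sub>R v + ((1/2) * t\<^sup>2) *\<^sub>R z) \<longlongrightarrow> y) (at_right 0)" for z
      by (auto intro!: tendsto_eq_intros)
    have bound: "\<forall>\<^sub>F t in at_right 0. norm (Q w t - Q w' t) \<le> L * norm (w - w')"
      using tendstoD[OF path[of w] e] tendstoD[OF path[of w'] e] eventually_at_right_less[of "0::real"]
    proof eventually_elim
      case (elim t)
      let ?p = "y + t *\<^sub>R v + ((1/2) * t\<^sup>2) *\<^sub>R w"
      let ?q = "y + t *\<^sub>R v + ((1/2) * t\<^sup>2) *\<^sub>R w'"
      have in_ball: "?p \<in> ball y e" "?q \<in> ball y e"
        using elim by (auto simp: dist_commute)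
      have c: "(1/2) * t\<^sup>2 > 0"
        using elim by simp
      have "Q w t - Q w' t = (f ?p - f ?q) /\<^sub>R ((1/2) * t\<^sup>2)"
        unfolding Q_def by (simp add: algebra_simps)
      then have "norm (Q w t - Q w' t) = norm (f ?p - f ?q) / ((1/2) * t\<^sup>2)"
        using c by simp
      also have "\<dots> \<le> L * norm (?p - ?q) / ((1/2) * t\<^sup>2)"
        using lipschitz_on_normD[OF L in_ball] c by (simp add: divide_right_mono)
      also have "?p - ?q = ((1/2) * t\<^sup>2) *\<^sub>R (w - w')"
        by (simp add: algebra_simps)
      also have "L * norm (((1/2) * t\<^sup>2) *\<^sub>R (w - w')) / ((1/2) * t\<^sup>2) = L * norm (w - w')"
        using c by simp
      finally show ?case .
    qed
    show ?thesis
      unfolding dist_norm by (rule Lim_norm_ubound[OF _ lim bound]) simp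
  qed
  moreover have "L \<ge> 0"
    using L lipschitz_on_nonneg by blast
  ultimately show ?thesis
    using that by (blast intro: lipschitz_onI)
qed

lemma tendsto_scaleR_lipschitz_comp_zero:
  fixes \<phi> :: "'a::real_normed_vector \<Rightarrow> 'b::real_normed_vector"
  assumes "L-lipschitz_on UNIV \<phi>" and "((\<lambda>t. t *\<^sub>R u t) \<longlongrightarrow> 0) (at_right 0)"
  shows "((\<lambda>t. t *\<^sub>R \<phi> (u t)) \<longlongrightarrow> 0) (at_right 0)"
proof (rule Lim_null_comparison)
  show "\<forall>\<^sub>F t in at_right 0. norm (t *\<^sub>R \<phi> (u t)) \<le> t * norm (\<phi> 0) + L * norm (t *\<^sub>R u t)"
    using eventually_at_right_less[of "0::real"]
  proof eventually_elim
    case (elim t)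
    have "norm (\<phi> (u t)) \<le> norm (\<phi> 0) + L * norm (u t)"
      using lipschitz_on_normD[OF assms(1), of "u t" 0] norm_triangle_ineq2[of "\<phi> (u t)" "\<phi> 0"]
      by simp
    then have "t * norm (\<phi> (u t)) \<le> t * (norm (\<phi> 0) + L * norm (u t))"
      using elim by (simp add: mult_left_mono)
    then show ?case
      using elim by (simp add: algebra_simps)
  qed
  have "((\<lambda>t. t * norm (\<phi> 0) + L * norm (t *\<^sub>R u t)) \<longlongrightarrow> 0 * norm (\<phi> 0) + L * norm (0::'a)) (at_right 0)"
    by (intro tendsto_intros assms(2))
  then show "((\<lambda>t. t * norm (\<phi> 0) + L * norm (t *\<^sub>R u t)) \<longlongrightarrow> 0) (at_right 0)"
    by simp
qed

lemma second_order_gph_regular_remainder: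
  fixes f :: "'a::real_normed_vector \<Rightarrow> 'b::real_normed_vector"
  assumes "second_order_gph_regular f y" and "((\<lambda>t. t *\<^sub>R u t) \<longlongrightarrow> 0) (at_right 0)"
  shows "((\<lambda>t. norm (f (y + t *\<^sub>R v + ((1/2) * t\<^sup>2) *\<^sub>R u t) - f y - t *\<^sub>R dir_deriv f y v
            - ((1/2) * t\<^sup>2) *\<^sub>R dir_deriv2 f y v (u t)) / t\<^sup>2) \<longlongrightarrow> 0) (at_right 0)"
proof -
  from assms obtain r where r: "((\<lambda>t. norm (r t) / t\<^sup>2) \<longlongrightarrow> 0) (at_right 0)"
    and eq: "\<forall>t\<ge>0. f (y + t *\<^sub>R v + ((1/2) * t\<^sup>2) *\<^sub>R u t)
                    = f y + t *\<^sub>R dir_deriv f y v + ((1/2) * t\<^sup>2) *\<^sub>R dir_deriv2 f y v (u t) + r t"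
    unfolding second_order_gph_regular_def by blast
  have "\<forall>\<^sub>F t in at_right 0. norm (r t) / t\<^sup>2 = norm (f (y + t *\<^sub>R v + ((1/2) * t\<^sup>2) *\<^sub>R u t) - f y
          - t *\<^sub>R dir_deriv f y v - ((1/2) * t\<^sup>2) *\<^sub>R dir_deriv2 f y v (u t)) / t\<^sup>2"
    using eventually_at_right_less[of "0::real"] by eventually_elim (use eq in \<open>simp add: algebra_simps\<close>)
  then show ?thesis
    by (rule Lim_transform_eventually[OF r])
qed

lemma second_order_gph_regular_remainder_perturbed:
  fixes f :: "'a::real_normed_vector \<Rightarrow> 'b::real_normed_vector"
  assumes f: "second_order_gph_regular f y"
    and U: "((\<lambda>t. t *\<^sub>R U t) \<longlongrightarrow> 0) (at_right 0)"
    and UV: "((\<lambda>t. U t - V t) \<longlongrightarrow> 0) (at_right 0)"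
  shows "((\<lambda>t. norm (f (y + t *\<^sub>R v + ((1/2) * t\<^sup>2) *\<^sub>R U t) - f y - t *\<^sub>R dir_deriv f y v
            - ((1/2) * t\<^sup>2) *\<^sub>R dir_deriv2 f y v (V t)) / t\<^sup>2) \<longlongrightarrow> 0) (at_right 0)"
proof -
  obtain L where L: "L-lipschitz_on UNIV (dir_deriv2 f y v)"
    using f lipschitz_on_dir_deriv2 unfolding second_order_gph_regular_def by metis
  define R where "R t = f (y + t *\<^sub>R v + ((1/2) * t\<^sup>2) *\<^sub>R U t) - f y - t *\<^sub>R dir_deriv f y v
                          - ((1/2) * t\<^sup>2) *\<^sub>R dir_deriv2 f y v (U t)" for t
  have R: "((\<lambda>t. norm (R t) / t\<^sup>2) \<longlongrightarrow> 0) (at_right 0)"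
    unfolding R_def by (rule second_order_gph_regular_remainder[OF f U])
  show ?thesis
  proof (rule Lim_null_comparison)
    show "\<forall>\<^sub>F t in at_right 0.
        norm (norm (f (y + t *\<^sub>R v + ((1/2) * t\<^sup>2) *\<^sub>R U t) - f y - t *\<^sub>R dir_deriv f y v
          - ((1/2) * t\<^sup>2) *\<^sub>R dir_deriv2 f y v (V t)) / t\<^sup>2)
        \<le> norm (R t) / t\<^sup>2 + (1/2) * (L * norm (U t - V t))"
      using eventually_at_right_less[of "0::real"]
    proof eventually_elim
      case (elim t)
      define Z where "Z = dir_deriv2 f y v (U t) - dir_deriv2 f y v (V t)"
      have c: "t\<^sup>2 > 0"
        using elim by simp
      have "f (y + t *\<^sub>R v + ((1/2) * t\<^sup>2) *\<^sub>R U t) - f y - t *\<^sub>R dir_deriv f y v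
          - ((1/2) * t\<^sup>2) *\<^sub>R dir_deriv2 f y v (V t) = R t + ((1/2) * t\<^sup>2) *\<^sub>R Z"
        by (simp add: R_def Z_def algebra_simps)
      then have "norm (norm (f (y + t *\<^sub>R v + ((1/2) * t\<^sup>2) *\<^sub>R U t) - f y - t *\<^sub>R dir_deriv f y v
          - ((1/2) * t\<^sup>2) *\<^sub>R dir_deriv2 f y v (V t)) / t\<^sup>2) \<le> (norm (R t) + (1/2) * t\<^sup>2 * norm Z) / t\<^sup>2"
        using c norm_triangle_ineq[of "R t" "((1/2) * t\<^sup>2) *\<^sub>R Z"] by (simp add: divide_right_mono)
      also have "\<dots> = norm (R t) / t\<^sup>2 + (1/2) * norm Z"
        using c by (simp add: field_simps)
      also have "norm Z \<le> L * norm (U t - V t)"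
        unfolding Z_def using lipschitz_on_normD[OF L] by simp
      finally show ?case
        by simp
    qed
    have "((\<lambda>t. norm (R t) / t\<^sup>2 + (1/2) * (L * norm (U t - V t))) \<longlongrightarrow> 0 + (1/2) * (L * norm (0::'a))) (at_right 0)"
      by (intro tendsto_intros R UV)
    then show "((\<lambda>t. norm (R t) / t\<^sup>2 + (1/2) * (L * norm (U t - V t))) \<longlongrightarrow> 0) (at_right 0)"
      by simp
  qed
qed

lemma second_order_gph_regular_image_path:
  fixes g :: "'a::real_normed_vector \<Rightarrow> 'b::real_normed_vector"
  assumes g: "second_order_gph_regular g x" and u: "((\<lambda>t. t *\<^sub>R u t) \<longlongrightarrow> 0) (at_right 0)"
  obtains U
  where "\<And>t. g (x + t *\<^sub>R d + ((1/2) * t\<^sup>2) *\<^sub>R u t) = g x + t *\<^sub>R dir_deriv g x d + ((1/2) * t\<^sup>2) *\<^sub>R U t"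
    and "((\<lambda>t. t *\<^sub>R U t) \<longlongrightarrow> 0) (at_right 0)"
    and "((\<lambda>t. U t - dir_deriv2 g x d (u t)) \<longlongrightarrow> 0) (at_right 0)"
proof -
  \<comment> \<open>At \<open>t = 0\<close> the division yields \<open>0\<close>, and the expansion below holds trivially.\<close>
  define U where "U t = (g (x + t *\<^sub>R d + ((1/2) * t\<^sup>2) *\<^sub>R u t) - g x - t *\<^sub>R dir_deriv g x d)
                          /\<^sub>R ((1/2) * t\<^sup>2)" for t
  have eq: "g (x + t *\<^sub>R d + ((1/2) * t\<^sup>2) *\<^sub>R u t) = g x + t *\<^sub>R dir_deriv g x d + ((1/2) * t\<^sup>2) *\<^sub>R U t" for t
    by (cases "t = 0") (simp_all add: U_def)
  have "((\<lambda>t. norm (U t - dir_deriv2 g x d (u t))) \<longlongrightarrow> 0) (at_right 0)"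
  proof -
    have transform: "\<forall>\<^sub>F t in at_right 0. 2 * (norm (g (x + t *\<^sub>R d + ((1/2) * t\<^sup>2) *\<^sub>R u t) - g x - t *\<^sub>R dir_deriv g x d
          - ((1/2) * t\<^sup>2) *\<^sub>R dir_deriv2 g x d (u t)) / t\<^sup>2) = norm (U t - dir_deriv2 g x d (u t))"
      using eventually_at_right_less[of "0::real"]
    proof eventually_elim
      case (elim t)
      then have "U t - dir_deriv2 g x d (u t) = (2 / t\<^sup>2) *\<^sub>R (g (x + t *\<^sub>R d + ((1/2) * t\<^sup>2) *\<^sub>R u t) - g x
          - t *\<^sub>R dir_deriv g x d - ((1/2) * t\<^sup>2) *\<^sub>R dir_deriv2 g x d (u t))"
        by (simp add: U_def algebra_simps)
      then show ?case
        by simp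
    qed
    show ?thesis
      by (rule Lim_transform_eventually[OF tendsto_mult_right_zero[OF
            second_order_gph_regular_remainder[OF g u]] transform])
  qed
  then have UV: "((\<lambda>t. U t - dir_deriv2 g x d (u t)) \<longlongrightarrow> 0) (at_right 0)"
    by (simp add: tendsto_norm_zero_iff)
  obtain L where "L-lipschitz_on UNIV (dir_deriv2 g x d)"
    using g lipschitz_on_dir_deriv2 unfolding second_order_gph_regular_def by metis
  then have "((\<lambda>t. t *\<^sub>R dir_deriv2 g x d (u t)) \<longlongrightarrow> 0) (at_right 0)"
    using u by (rule tendsto_scaleR_lipschitz_comp_zero)
  moreover have "((\<lambda>t. t *\<^sub>R (U t - dir_deriv2 g x d (u t))) \<longlongrightarrow> 0 *\<^sub>R 0) (at_right 0)"
    by (intro tendsto_intros UV)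
  ultimately have "((\<lambda>t. t *\<^sub>R dir_deriv2 g x d (u t) + t *\<^sub>R (U t - dir_deriv2 g x d (u t))) \<longlongrightarrow> 0 + 0) (at_right 0)"
    by (intro tendsto_add) simp_all
  then have "((\<lambda>t. t *\<^sub>R U t) \<longlongrightarrow> 0) (at_right 0)"
    by (simp add: algebra_simps)
  with eq UV that show ?thesis
    by blast
qed

lemma second_order_gph_regularI:
  fixes h :: "'a::real_normed_vector \<Rightarrow> 'b::real_normed_vector"
  assumes lip: "locally_lipschitz_at h x"
    and expansion: "\<And>d u. ((\<lambda>t. t *\<^sub>R u t) \<longlongrightarrow> 0) (at_right 0) \<Longrightarrow>
      ((\<lambda>t. norm (h (x + t *\<^sub>R d + ((1/2) * t\<^sup>2) *\<^sub>R u t) - h x - t *\<^sub>R A d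
          - ((1/2) * t\<^sup>2) *\<^sub>R B d (u t)) / t\<^sup>2) \<longlongrightarrow> 0) (at_right 0)"
  shows "second_order_gph_regular h x"
proof -
  have first: "((\<lambda>t. (h (x + t *\<^sub>R d) - h x) /\<^sub>R t) \<longlongrightarrow> A d) (at_right 0)" for d
    using expansion[of "\<lambda>_. 0" d] by (intro tendsto_first_order_quotient) simp
  have dir_deriv_eq: "dir_deriv h x d = A d" for d
    unfolding dir_deriv_def by (rule tendsto_Lim[OF _ first]) simp
  have second: "((\<lambda>t. (h (x + t *\<^sub>R d + ((1/2) * t\<^sup>2) *\<^sub>R w) - h x - t *\<^sub>R A d) /\<^sub>R ((1/2) * t\<^sup>2))
      \<longlongrightarrow> B d w) (at_right 0)" for d w
  proof -
    have "((\<lambda>t. t *\<^sub>R w) \<longlongrightarrow> 0) (at_right (0::real))"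
      by (auto intro!: tendsto_eq_intros)
    then show ?thesis
      using expansion[of "\<lambda>_. w" d] by (intro tendsto_second_order_quotient) simp
  qed
  have dir_deriv2_eq: "dir_deriv2 h x d w = B d w" for d w
    unfolding dir_deriv2_def dir_deriv_eq by (rule tendsto_Lim[OF _ second]) simp
  have "second_order_dir_differentiable h x"
    unfolding second_order_dir_differentiable_def dir_deriv_eq using first second by blast
  moreover have "\<exists>r. ((\<lambda>t. norm (r t) / t\<^sup>2) \<longlongrightarrow> 0) (at_right 0) \<and>
      (\<forall>t\<ge>0. h (x + t *\<^sub>R d + ((1/2) * t\<^sup>2) *\<^sub>R w t) = h x + t *\<^sub>R A d + ((1/2) * t\<^sup>2) *\<^sub>R B d (w t) + r t)"
    if "((\<lambda>t. t *\<^sub>R w t) \<longlongrightarrow> 0) (at_right 0)" for d w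
    using expansion[OF that, of d] by (intro exI[of _ "\<lambda>t. h (x + t *\<^sub>R d + ((1/2) * t\<^sup>2) *\<^sub>R w t)
        - h x - t *\<^sub>R A d - ((1/2) * t\<^sup>2) *\<^sub>R B d (w t)"]) simp
  ultimately show ?thesis
    unfolding second_order_gph_regular_def dir_deriv_eq dir_deriv2_eq using lip by blast
qed

lemma locally_lipschitz_at_compose:
  assumes "locally_lipschitz_at g x" and "locally_lipschitz_at f (g x)"
  shows "locally_lipschitz_at (f \<circ> g) x"
proof -
  obtain e1 L1 where e1: "e1 > 0" and L1: "L1-lipschitz_on (ball x e1) g"
    using assms(1) unfolding locally_lipschitz_at_def by blast
  obtain e2 L2 where e2: "e2 > 0" and L2: "L2-lipschitz_on (ball (g x) e2) f"
    using assms(2) unfolding locally_lipschitz_at_def by blast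
  have "isCont g x"
    using lipschitz_on_continuous_on[OF L1] e1 by (simp add: continuous_on_eq_continuous_at)
  then obtain \<delta> where \<delta>: "\<delta> > 0" "g ` ball x \<delta> \<subseteq> ball (g x) e2"
    using e2 unfolding continuous_at_ball by blast
  define \<delta>' where "\<delta>' = min \<delta> e1"
  have "L1-lipschitz_on (ball x \<delta>') g"
    using L1 by (rule lipschitz_on_subset) (auto simp: \<delta>'_def)
  moreover have "L2-lipschitz_on (g ` ball x \<delta>') f"
    using L2 by (rule lipschitz_on_subset) (use \<delta> in \<open>auto simp: \<delta>'_def\<close>)
  ultimately have "(L2 * L1)-lipschitz_on (ball x \<delta>') (f \<circ> g)"
    by (rule lipschitz_on_compose)
  moreover have "\<delta>' > 0"
    using \<delta> e1 by (simp add: \<delta>'_def)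
  ultimately show ?thesis
    unfolding locally_lipschitz_at_def by blast
qed

theorem proposition2p4:
  fixes g :: "'n::euclidean_space \<Rightarrow> 'm::euclidean_space"
    and f :: "'m \<Rightarrow> 'r::euclidean_space"
    and xs :: 'n
  assumes "second_order_gph_regular g xs"
    and "second_order_gph_regular f (g xs)"
  shows "second_order_gph_regular (f \<circ> g) xs"
proof (rule second_order_gph_regularI)
  show "locally_lipschitz_at (f \<circ> g) xs"
    using assms locally_lipschitz_at_compose unfolding second_order_gph_regular_def by blast
next
  fix d and u :: "real \<Rightarrow> 'n"
  assume u: "((\<lambda>t. t *\<^sub>R u t) \<longlongrightarrow> 0) (at_right 0)"
  obtain U where image: "\<And>t. g (xs + t *\<^sub>R d + ((1/2) * t\<^sup>2) *\<^sub>R u t)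
        = g xs + t *\<^sub>R dir_deriv g xs d + ((1/2) * t\<^sup>2) *\<^sub>R U t"
    and U: "((\<lambda>t. t *\<^sub>R U t) \<longlongrightarrow> 0) (at_right 0)"
    and UV: "((\<lambda>t. U t - dir_deriv2 g xs d (u t)) \<longlongrightarrow> 0) (at_right 0)"
    using second_order_gph_regular_image_path[OF assms(1) u] by blast
  show "((\<lambda>t. norm ((f \<circ> g) (xs + t *\<^sub>R d + ((1/2) * t\<^sup>2) *\<^sub>R u t) - (f \<circ> g) xs
      - t *\<^sub>R dir_deriv f (g xs) (dir_deriv g xs d)
      - ((1/2) * t\<^sup>2) *\<^sub>R dir_deriv2 f (g xs) (dir_deriv g xs d) (dir_deriv2 g xs d (u t))) / t\<^sup>2)
      \<longlongrightarrow> 0) (at_right 0)"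
    unfolding comp_def image by (rule second_order_gph_regular_remainder_perturbed[OF assms(2) U UV])
qed

end
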